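(* Consider the MPCC $\min f(z)$ s.t. $g(z)\le0$, $h(z)=0$, $0\le G(z)\perp H(z)\ge 0$, with differentiable $f,g,h,G,H$ on $\mathbb{R}^n$. Let $\epsilon^k>0$ with $\epsilon^k\to0$, and let $p^k\in\mathbb{R}^m$ with each $p^k_i\in\{0\}\cup[0,\epsilon^k/2]$ be the parameters produced by the Bounding Algorithm. Suppose this generates a sequence $z^k\to\bar z$, where each $z^k$ is a KKT point of BA$(\epsilon^k)$ with parameters $p^k$ and NLP multipliers $u^k=(u^{g,k},u^{h,k},u^{\Phi,k})$, and suppose MPCC-MFCQ holds at $\bar z$. Then: 1. For all $k$ with $\epsilon^k>0$ sufficiently small, the multipliers $u^k$ are bounded. 2. $\bar z$ is a C-stationary point of the MPCC, with multipliers given by $\bar\lambda^g=\bar u^g=\lim_k u^{g,k}$, $\bar\lambda^h=\bar u^h=\lim_k u^{h,k}$, $\bar\lambda^G_i=\bar u^\Phi_i=\lim_k u^{\Phi,k}_i$ for $i\in\alpha(\bar z)$, $\bar\lambda^H_i=\bar u^\Phi_i=\lim_k u^{\Phi,k}_i$ for $i\in\gamma(\bar z)$, and $\bar\lambda^G_i=\bar u^\Phi_i\theta_i$, $\bar\lambda^H_i=\bar u^\Phi_i(1-\theta_i)$ for $i\in\beta(\bar z)$, for some $\theta_i\in[0,1]$ (limits taken along a convergent subsequence of the bounded multipliers). 3. If $\bar u^\Phi_i\ge 0$ for all $i\in\beta(\bar z)$, then $\bar z$ is S-stationary and therefore B-stationary.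
   Context: Index sets at feasible $\bar z$: $I_g(\bar z)=\{i:g_i(\bar z)=0\}$, $I_h=\{1,\dots,n_h\}$, $\alpha(\bar z)=\{i:G_i(\bar z)=0<H_i(\bar z)\}$, $\gamma(\bar z)=\{i:G_i(\bar z)>0=H_i(\bar z)\}$, $\beta(\bar z)=\{i:G_i(\bar z)=H_i(\bar z)=0\}$. Smoothed NCP function: $\Phi^\epsilon_i(z)=\tfrac12\big(G_i(z)+H_i(z)-\sqrt{(G_i(z)-H_i(z))^2+\epsilon^2}\big)$. Problem BA$(\epsilon)$ with parameters $p\in\mathbb{R}^m$, $p_i\in[0,\epsilon/2]$: $\min f(z)$ s.t. $g(z)\le0$ (multipliers $u^g$), $h(z)=0$ ($u^h$), $\Phi^\epsilon_i(z)+p_i=0$, $i=1,\dots,m$ ($u^\Phi_i$). A KKT point $z^k$ of BA$(\epsilon^k)$ is feasible and has $u^{g,k}\ge0$ with $0=\nabla f(z^k)+\sum_{i\in I_g(z^k)}u^{g,k}_i\nabla g_i(z^k)+\sum_{i}u^{h,k}_i\nabla h_i(z^k)-\sum_{i=1}^m u^{\Phi,k}_i\nabla\Phi^{\epsilon^k}_i(z^k)$. Bounding Algorithm: start with $p^0=0$, $\epsilon^0>0$, $\kappa\in(0,1)$; at iteration $k$ compute a KKT point $z^k$ and multipliers $u^k$ of BA$(\epsilon^k)$ with parameters $p^k$; set $P_0=\{i:p^k_i=0,\,u^{\Phi,k}_i>0\}$, $P_\epsilon=\{i:p^k_i=\epsilon^k/2,\,u^{\Phi,k}_i<0\}$, $\epsilon^{k+1}=\kappa\epsilon^k$,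 and $p^{k+1}_i=\epsilon^{k+1}/2$ for $i\in P_0$, $0$ for $i\in P_\epsilon$, $\kappa p^k_i$ otherwise. MPCC-MFCQ at $\bar z$: the gradients $\nabla h_i(\bar z)$ ($i\in I_h$), $\nabla G_i(\bar z)$ ($i\in\alpha(\bar z)\cup\beta(\bar z)$), $\nabla H_i(\bar z)$ ($i\in\gamma(\bar z)\cup\beta(\bar z)$) are linearly independent and there is $d$ orthogonal to all of them with $\nabla g_i(\bar z)^Td<0$ for $i\in I_g(\bar z)$ (equivalently, MFCQ for the NLP obtained by imposing $G_i=0$ for $i\in\alpha\cup\beta$, $H_i=0$ for $i\in\gamma\cup\beta$). Stationarity: $\bar z$ is weakly stationary if there are $\bar\lambda^g\ge0$ and $\bar\lambda^h,\bar\lambda^G,\bar\lambda^H$ with $0=\nabla f(\bar z)+\sum_{i\in I_g(\bar z)}\bar\lambda^g_i\nabla g_i(\bar z)+\sum_{i\in I_h}\bar\lambda^h_i\nabla h_i(\bar z)-\sum_{i\in\alpha\cup\beta}\bar\lambda^G_i\nabla G_i(\bar z)-\sum_{i\in\gamma\cup\beta}\bar\lambda^H_i\nabla H_i(\bar z)$; it is C-stationary if moreover $\bar\lambda^G_i\bar\lambda^H_i\ge0$ for all $i\in\beta(\bar z)$, and S-stationary if $\bar\lambda^G_i,\bar\lambda^H_i\ge 0$ for all $i\in\beta(\bar z)$. B-stationarity: $\nabla f(\bar z)^Td\ge0$ for all $d$ in the tangent cone of the MPCC feasible set at $\bar z$. *)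

theory Defs
  imports "HOL-Analysis.Analysis"
begin

text \<open>Data of the MPCC: min f(z) s.t. g_i(z) \<le> 0 (i < ng), h_i(z) = 0 (i < nh),
  0 \<le> G_i(z) \<perp> H_i(z) \<ge> 0 (i < m). Indices are 0-based.\<close>

record 'a mpcc =
  obj :: "'a \<Rightarrow> real"
  gc  :: "nat \<Rightarrow> 'a \<Rightarrow> real"
  ng  :: nat
  hc  :: "nat \<Rightarrow> 'a \<Rightarrow> real"
  nh  :: nat
  Gc  :: "nat \<Rightarrow> 'a \<Rightarrow> real"
  Hc  :: "nat \<Rightarrow> 'a \<Rightarrow> real"
  mc  :: nat

definition grad :: "('a::euclidean_space \<Rightarrow> real) \<Rightarrow> 'a \<Rightarrow> 'a" where
  "grad \<phi> z = (SOME D. GDERIV \<phi> z :> D)"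

definition C1_fun :: "('a::euclidean_space \<Rightarrow> real) \<Rightarrow> bool" where
  "C1_fun \<phi> \<longleftrightarrow> (\<forall>z. \<phi> differentiable (at z)) \<and> continuous_on UNIV (grad \<phi>)"

definition Ig :: "'a mpcc \<Rightarrow> 'a \<Rightarrow> nat set" where
  "Ig P z = {i. i < ng P \<and> gc P i z = 0}"

definition alpha :: "'a mpcc \<Rightarrow> 'a \<Rightarrow> nat set" where
  "alpha P z = {i. i < mc P \<and> Gc P i z = 0 \<and> 0 < Hc P i z}"

definition gamma :: "'a mpcc \<Rightarrow> 'a \<Rightarrow> nat set" where
  "gamma P z = {i. i < mc P \<and> 0 < Gc P i z \<and> Hc P i z = 0}"

definition beta :: "'a mpcc \<Rightarrow> 'a \<Rightarrow> nat set" where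
  "beta P z = {i. i < mc P \<and> Gc P i z = 0 \<and> Hc P i z = 0}"

definition mpcc_feasible :: "'a mpcc \<Rightarrow> 'a \<Rightarrow> bool" where
  "mpcc_feasible P z \<longleftrightarrow>
     (\<forall>i<ng P. gc P i z \<le> 0) \<and> (\<forall>i<nh P. hc P i z = 0) \<and>
     (\<forall>i<mc P. 0 \<le> Gc P i z \<and> 0 \<le> Hc P i z \<and> Gc P i z * Hc P i z = 0)"

definition mpcc_set :: "'a mpcc \<Rightarrow> 'a set" where
  "mpcc_set P = {z. mpcc_feasible P z}"

definition Phi :: "real \<Rightarrow> 'a mpcc \<Rightarrow> nat \<Rightarrow> 'a \<Rightarrow> real" where
  "Phi eps P i z = (Gc P i z + Hc P i z - sqrt ((Gc P i z - Hc P i z)\<^sup>2 + eps\<^sup>2)) / 2"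

definition BA_feasible :: "real \<Rightarrow> (nat \<Rightarrow> real) \<Rightarrow> 'a mpcc \<Rightarrow> 'a \<Rightarrow> bool" where
  "BA_feasible eps p P z \<longleftrightarrow>
     (\<forall>i<ng P. gc P i z \<le> 0) \<and> (\<forall>i<nh P. hc P i z = 0) \<and>
     (\<forall>i<mc P. Phi eps P i z + p i = 0)"

definition BA_KKT :: "real \<Rightarrow> (nat \<Rightarrow> real) \<Rightarrow> ('a::euclidean_space) mpcc \<Rightarrow> 'a
    \<Rightarrow> (nat \<Rightarrow> real) \<Rightarrow> (nat \<Rightarrow> real) \<Rightarrow> (nat \<Rightarrow> real) \<Rightarrow> bool" where
  "BA_KKT eps p P z ug uh uP \<longleftrightarrow>
     BA_feasible eps p P z \<and> (\<forall>i<ng P. 0 \<le> ug i) \<and>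
     (\<forall>i<ng P. i \<notin> Ig P z \<longrightarrow> ug i = 0) \<and>
     grad (obj P) z + (\<Sum>i\<in>Ig P z. ug i *\<^sub>R grad (gc P i) z)
       + (\<Sum>i<nh P. uh i *\<^sub>R grad (hc P i) z)
       - (\<Sum>i<mc P. uP i *\<^sub>R grad (Phi eps P i) z) = 0"

definition bounding_alg :: "('a::euclidean_space) mpcc \<Rightarrow> real \<Rightarrow> (nat \<Rightarrow> real)
    \<Rightarrow> (nat \<Rightarrow> nat \<Rightarrow> real) \<Rightarrow> (nat \<Rightarrow> 'a)
    \<Rightarrow> (nat \<Rightarrow> nat \<Rightarrow> real) \<Rightarrow> (nat \<Rightarrow> nat \<Rightarrow> real) \<Rightarrow> (nat \<Rightarrow> nat \<Rightarrow> real) \<Rightarrow> bool" where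
  "bounding_alg P \<kappa> eps p z ug uh uP \<longleftrightarrow>
     0 < eps 0 \<and> 0 < \<kappa> \<and> \<kappa> < 1 \<and>
     (\<forall>k. eps (Suc k) = \<kappa> * eps k) \<and>
     (\<forall>i. p 0 i = 0) \<and>
     (\<forall>k i. p (Suc k) i =
        (if p k i = 0 \<and> 0 < uP k i then eps (Suc k) / 2
         else if p k i = eps k / 2 \<and> uP k i < 0 then 0
         else \<kappa> * p k i)) \<and>
     (\<forall>k. BA_KKT (eps k) (p k) P (z k) (ug k) (uh k) (uP k))"

definition MPCC_MFCQ :: "('a::euclidean_space) mpcc \<Rightarrow> 'a \<Rightarrow> bool" where
  "MPCC_MFCQ P z \<longleftrightarrow>
     (\<forall>ch cG cH.
        (\<Sum>i<nh P. ch i *\<^sub>R grad (hc P i) z)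
        + (\<Sum>i\<in>alpha P z \<union> beta P z. cG i *\<^sub>R grad (Gc P i) z)
        + (\<Sum>i\<in>gamma P z \<union> beta P z. cH i *\<^sub>R grad (Hc P i) z) = 0 \<longrightarrow>
        (\<forall>i<nh P. ch i = 0) \<and> (\<forall>i\<in>alpha P z \<union> beta P z. cG i = 0) \<and>
        (\<forall>i\<in>gamma P z \<union> beta P z. cH i = 0)) \<and>
     (\<exists>d. (\<forall>i<nh P. grad (hc P i) z \<bullet> d = 0) \<and>
          (\<forall>i\<in>alpha P z \<union> beta P z. grad (Gc P i) z \<bullet> d = 0) \<and>
          (\<forall>i\<in>gamma P z \<union> beta P z. grad (Hc P i) z \<bullet> d = 0) \<and>
          (\<forall>i\<in>Ig P z. grad (gc P i) z \<bullet> d < 0))"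

definition weak_stat_mult :: "('a::euclidean_space) mpcc \<Rightarrow> 'a
    \<Rightarrow> (nat \<Rightarrow> real) \<Rightarrow> (nat \<Rightarrow> real) \<Rightarrow> (nat \<Rightarrow> real) \<Rightarrow> (nat \<Rightarrow> real) \<Rightarrow> bool" where
  "weak_stat_mult P z lg lh lG lH \<longleftrightarrow>
     mpcc_feasible P z \<and> (\<forall>i\<in>Ig P z. 0 \<le> lg i) \<and>
     grad (obj P) z + (\<Sum>i\<in>Ig P z. lg i *\<^sub>R grad (gc P i) z)
       + (\<Sum>i<nh P. lh i *\<^sub>R grad (hc P i) z)
       - (\<Sum>i\<in>alpha P z \<union> beta P z. lG i *\<^sub>R grad (Gc P i) z)
       - (\<Sum>i\<in>gamma P z \<union> beta P z. lH i *\<^sub>R grad (Hc P i) z) = 0"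

definition C_stat_mult :: "('a::euclidean_space) mpcc \<Rightarrow> 'a
    \<Rightarrow> (nat \<Rightarrow> real) \<Rightarrow> (nat \<Rightarrow> real) \<Rightarrow> (nat \<Rightarrow> real) \<Rightarrow> (nat \<Rightarrow> real) \<Rightarrow> bool" where
  "C_stat_mult P z lg lh lG lH \<longleftrightarrow>
     weak_stat_mult P z lg lh lG lH \<and> (\<forall>i\<in>beta P z. 0 \<le> lG i * lH i)"

definition S_stat_mult :: "('a::euclidean_space) mpcc \<Rightarrow> 'a
    \<Rightarrow> (nat \<Rightarrow> real) \<Rightarrow> (nat \<Rightarrow> real) \<Rightarrow> (nat \<Rightarrow> real) \<Rightarrow> (nat \<Rightarrow> real) \<Rightarrow> bool" where
  "S_stat_mult P z lg lh lG lH \<longleftrightarrow>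
     weak_stat_mult P z lg lh lG lH \<and> (\<forall>i\<in>beta P z. 0 \<le> lG i \<and> 0 \<le> lH i)"

definition C_stationary :: "('a::euclidean_space) mpcc \<Rightarrow> 'a \<Rightarrow> bool" where
  "C_stationary P z \<longleftrightarrow> (\<exists>lg lh lG lH. C_stat_mult P z lg lh lG lH)"

definition S_stationary :: "('a::euclidean_space) mpcc \<Rightarrow> 'a \<Rightarrow> bool" where
  "S_stationary P z \<longleftrightarrow> (\<exists>lg lh lG lH. S_stat_mult P z lg lh lG lH)"

definition tangent_cone :: "('a::real_normed_vector) set \<Rightarrow> 'a \<Rightarrow> 'a set" where
  "tangent_cone X z = {d. \<exists>zs t. (\<forall>k. zs k \<in> X) \<and> zs \<longlonglongrightarrow> z \<and>
      (\<forall>k. 0 < t k) \<and> t \<longlonglongrightarrow> 0 \<and> (\<lambda>k. (1 / t k) *\<^sub>R (zs k - z)) \<longlonglongrightarrow> d}"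

definition B_stationary :: "('a::euclidean_space) mpcc \<Rightarrow> 'a \<Rightarrow> bool" where
  "B_stationary P z \<longleftrightarrow> mpcc_feasible P z \<and>
     (\<forall>d\<in>tangent_cone (mpcc_set P) z. 0 \<le> grad (obj P) z \<bullet> d)"

end

(*
  The KKT equation of BA(eps) writes grad f as a combination of the gradients of g, h and
  Phi^eps_i, and grad Phi^eps_i = w grad G_i + (1 - w) grad H_i with a weight w in [0, 1]
  that tends to 1 on alpha(zbar) and to 0 on gamma(zbar) as eps -> 0.  If the multipliers
  were unbounded, dividing the KKT equation by their size and passing to a limit would give
  a nonzero multiplier vector annihilating the constraint gradients with nonnegative weights
  on the active g_i; MPCC-MFCQ excludes this.  So a subsequence of the multipliers converges,
  and the limit of the KKT equation is weak stationarity with lambda^G = theta u^Phi and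
  lambda^H = (1 - theta) u^Phi on beta(zbar), whence lambda^G lambda^H = (u^Phi)^2 theta (1 - theta) >= 0.
  If u^Phi >= 0 on beta(zbar) both are nonnegative, and an S-stationary point is B-stationary
  because the tangent cone of the MPCC lies in its linearised cone.
*)

theory Submission
  imports Defs
begin

lemma has_gradient_grad:
  fixes \<phi> :: "'a::euclidean_space \<Rightarrow> real"
  assumes "\<phi> differentiable (at z)"
  shows "GDERIV \<phi> z :> grad \<phi> z"
proof -
  obtain f' where f': "(\<phi> has_derivative f') (at z)"
    using assms differentiable_def by blast
  have "f' = (\<lambda>h. h \<bullet> adjoint f' 1)"
    using adjoint_works[OF has_derivative_linear[OF f'], of _ 1] by (auto simp: fun_eq_iff)
  then have "\<exists>D. GDERIV \<phi> z :> D"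
    using f' unfolding gderiv_def by metis
  then show ?thesis
    unfolding grad_def by (rule someI_ex)
qed

lemma grad_eqI:
  fixes \<phi> :: "'a::euclidean_space \<Rightarrow> real"
  assumes D: "GDERIV \<phi> z :> D"
  shows "grad \<phi> z = D"
proof -
  have "GDERIV \<phi> z :> grad \<phi> z"
    using D unfolding grad_def by (rule someI)
  then have "(\<lambda>h. h \<bullet> grad \<phi> z) = (\<lambda>h. h \<bullet> D)"
    using D unfolding gderiv_def by (rule has_derivative_unique)
  then show ?thesis
    by (metis vector_eq_ldot)
qed

lemma C1_fun_has_gradient: "C1_fun \<phi> \<Longrightarrow> GDERIV \<phi> x :> grad \<phi> x"
  unfolding C1_fun_def by (blast intro: has_gradient_grad)

lemma C1_fun_continuous_on: "C1_fun \<phi> \<Longrightarrow> continuous_on UNIV \<phi>"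
  unfolding C1_fun_def by (blast intro: differentiable_imp_continuous_on differentiable_at_imp_differentiable_on)

lemma C1_fun_tendsto: "C1_fun \<phi> \<Longrightarrow> y \<longlonglongrightarrow> x \<Longrightarrow> (\<lambda>k. \<phi> (y k)) \<longlonglongrightarrow> \<phi> x"
  by (metis C1_fun_continuous_on continuous_on_tendsto_compose UNIV_I always_eventually)

lemma C1_fun_grad_tendsto:
  "C1_fun \<phi> \<Longrightarrow> y \<longlonglongrightarrow> x \<Longrightarrow> (\<lambda>k. grad \<phi> (y k)) \<longlonglongrightarrow> grad \<phi> x"
  unfolding C1_fun_def by (metis continuous_on_tendsto_compose UNIV_I always_eventually)

lemma C1_fun_eventually_pos:
  assumes "C1_fun \<phi>" "0 < \<phi> z"
  shows "\<forall>\<^sub>F y in nhds z. 0 < \<phi> y"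
proof -
  have "open {y. 0 < \<phi> y}"
    by (rule open_Collect_less[OF continuous_on_const C1_fun_continuous_on[OF assms(1)]])
  from eventually_nhds_in_open[OF this] show ?thesis
    using assms(2) by simp
qed

section \<open>The smoothed NCP function\<close>

definition Phi_weight :: "real \<Rightarrow> ('a::euclidean_space) mpcc \<Rightarrow> nat \<Rightarrow> 'a \<Rightarrow> real" where
  "Phi_weight e P i z =
     (1 - (Gc P i z - Hc P i z) / sqrt ((Gc P i z - Hc P i z)\<^sup>2 + e\<^sup>2)) / 2"

lemma has_gradient_Phi:
  fixes P :: "('a::euclidean_space) mpcc"
  assumes G: "Gc P i differentiable (at z)" and H: "Hc P i differentiable (at z)" and "e \<noteq> 0"
  shows "GDERIV (Phi e P i) z :>
    Phi_weight e P i z *\<^sub>R grad (Gc P i) z + (1 - Phi_weight e P i z) *\<^sub>R grad (Hc P i) z"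
proof -
  define d where "d = Gc P i z - Hc P i z"
  define s where "s = sqrt (d\<^sup>2 + e\<^sup>2)"
  have "0 < d\<^sup>2 + e\<^sup>2"
    using \<open>e \<noteq> 0\<close> by (simp add: add_nonneg_pos)
  then have "s \<noteq> 0"
    unfolding s_def by (metis real_sqrt_eq_zero_cancel_iff less_irrefl)
  have dG: "GDERIV (Gc P i) z :> grad (Gc P i) z" and dH: "GDERIV (Hc P i) z :> grad (Hc P i) z"
    using G H by (simp_all add: has_gradient_grad)
  have sq: "GDERIV (\<lambda>z. (Gc P i z - Hc P i z)\<^sup>2 + e\<^sup>2) z :>
      (2 * d) *\<^sub>R (grad (Gc P i) z - grad (Hc P i) z)"
    by (rule GDERIV_DERIV_compose[OF GDERIV_diff[OF dG dH], where g = "\<lambda>y. y\<^sup>2 + e\<^sup>2"])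
      (auto intro!: derivative_eq_intros simp: d_def)
  have "DERIV sqrt ((Gc P i z - Hc P i z)\<^sup>2 + e\<^sup>2) :> inverse s / 2"
    using DERIV_real_sqrt[OF \<open>0 < d\<^sup>2 + e\<^sup>2\<close>] by (simp add: d_def s_def)
  from GDERIV_DERIV_compose[OF sq this]
  have "GDERIV (\<lambda>z. sqrt ((Gc P i z - Hc P i z)\<^sup>2 + e\<^sup>2)) z :>
      (inverse s / 2) *\<^sub>R (2 * d) *\<^sub>R (grad (Gc P i) z - grad (Hc P i) z)" .
  then have "GDERIV (\<lambda>z. sqrt ((Gc P i z - Hc P i z)\<^sup>2 + e\<^sup>2)) z :>
      (d / s) *\<^sub>R (grad (Gc P i) z - grad (Hc P i) z)"
    by (rule GDERIV_subst) (simp only: scaleR_scaleR, simp add: field_simps)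
  then have "GDERIV (\<lambda>z. Gc P i z + Hc P i z - sqrt ((Gc P i z - Hc P i z)\<^sup>2 + e\<^sup>2)) z :>
      grad (Gc P i) z + grad (Hc P i) z - (d / s) *\<^sub>R (grad (Gc P i) z - grad (Hc P i) z)"
    by (intro GDERIV_diff GDERIV_add dG dH)
  then have "GDERIV (Phi e P i) z :>
      (1 / 2) *\<^sub>R (grad (Gc P i) z + grad (Hc P i) z - (d / s) *\<^sub>R (grad (Gc P i) z - grad (Hc P i) z))"
    unfolding Phi_def by (rule GDERIV_DERIV_compose[where g = "\<lambda>y. y / 2"]) (auto intro!: derivative_eq_intros)
  then show ?thesis
    unfolding Phi_weight_def d_def[symmetric] s_def[symmetric] by (simp add: algebra_simps diff_divide_distrib)
qed

lemma abs_div_sqrt_add_square_le_1: "\<bar>x / sqrt (x\<^sup>2 + y\<^sup>2)\<bar> \<le> (1::real)"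
proof -
  have "\<bar>x\<bar> \<le> sqrt (x\<^sup>2 + y\<^sup>2)"
    by (metis real_sqrt_abs real_sqrt_le_mono le_add_same_cancel1 zero_le_power2)
  show ?thesis
  proof (cases "x = 0")
    case False
    then have "0 < sqrt (x\<^sup>2 + y\<^sup>2)"
      by (simp add: add_pos_nonneg)
    with \<open>\<bar>x\<bar> \<le> sqrt (x\<^sup>2 + y\<^sup>2)\<close> show ?thesis
      by (simp add: abs_divide)
  qed simp
qed

lemma Phi_weight_bounds: "0 \<le> Phi_weight e P i z \<and> Phi_weight e P i z \<le> 1"
proof -
  define q where "q = (Gc P i z - Hc P i z) / sqrt ((Gc P i z - Hc P i z)\<^sup>2 + e\<^sup>2)"
  have "\<bar>q\<bar> \<le> 1"
    unfolding q_def by (rule abs_div_sqrt_add_square_le_1)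
  then show ?thesis
    unfolding Phi_weight_def q_def[symmetric] by (simp add: abs_le_iff)
qed

lemma abs_Phi_weight_le_1: "\<bar>Phi_weight e P i z\<bar> \<le> 1"
  by (metis Phi_weight_bounds abs_of_nonneg)

lemma min_eq_0_iff: "min a b = 0 \<longleftrightarrow> 0 \<le> a \<and> 0 \<le> b \<and> a * b = (0::real)"
  by (cases "a \<le> b") (auto simp: min_def)

lemma smoothed_min_tendsto:
  fixes a b e :: "nat \<Rightarrow> real"
  assumes "a \<longlonglongrightarrow> a0" "b \<longlonglongrightarrow> b0" "e \<longlonglongrightarrow> 0"
  shows "(\<lambda>k. (a k + b k - sqrt ((a k - b k)\<^sup>2 + (e k)\<^sup>2)) / 2) \<longlonglongrightarrow> min a0 b0"
proof -
  have "(\<lambda>k. (a k + b k - sqrt ((a k - b k)\<^sup>2 + (e k)\<^sup>2)) / 2)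
      \<longlonglongrightarrow> (a0 + b0 - sqrt ((a0 - b0)\<^sup>2 + 0\<^sup>2)) / 2"
    by (intro tendsto_intros assms) simp
  also have "(a0 + b0 - sqrt ((a0 - b0)\<^sup>2 + 0\<^sup>2)) / 2 = min a0 b0"
    by (simp add: min_def)
  finally show ?thesis .
qed

lemma smoothed_min_weight_tendsto:
  fixes a b e :: "nat \<Rightarrow> real"
  assumes "a \<longlonglongrightarrow> a0" "b \<longlonglongrightarrow> b0" "e \<longlonglongrightarrow> 0" "a0 \<noteq> b0"
  shows "(\<lambda>k. (1 - (a k - b k) / sqrt ((a k - b k)\<^sup>2 + (e k)\<^sup>2)) / 2)
    \<longlonglongrightarrow> (if a0 < b0 then 1 else 0)"
proof -
  have "(\<lambda>k. (1 - (a k - b k) / sqrt ((a k - b k)\<^sup>2 + (e k)\<^sup>2)) / 2)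
      \<longlonglongrightarrow> (1 - (a0 - b0) / sqrt ((a0 - b0)\<^sup>2 + 0\<^sup>2)) / 2"
    using \<open>a0 \<noteq> b0\<close> by (intro tendsto_intros assms) auto
  also have "(a0 - b0) / sqrt ((a0 - b0)\<^sup>2 + 0\<^sup>2) = (if a0 < b0 then -1 else 1)"
    using \<open>a0 \<noteq> b0\<close> by (auto simp: abs_if divide_eq_eq)
  finally show ?thesis
    by (cases "a0 < b0") simp_all
qed

lemma Bseq_family_convergent_subseq:
  fixes f :: "nat \<Rightarrow> 'i \<Rightarrow> real"
  assumes "finite I" and "\<And>i. i \<in> I \<Longrightarrow> Bseq (\<lambda>k. f k i)"
  shows "\<exists>r L. strict_mono r \<and> (\<forall>i\<in>I. (\<lambda>k. f (r k) i) \<longlonglongrightarrow> L i)"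
  using assms
proof (induction I rule: finite_induct)
  case empty
  show ?case using strict_mono_id by blast
next
  case (insert j I)
  then obtain r L where r: "strict_mono r" and L: "\<forall>i\<in>I. (\<lambda>k. f (r k) i) \<longlonglongrightarrow> L i"
    by blast
  have "bounded (range (\<lambda>k. f (r k) j))"
    using Bseq_subseq[OF insert.prems[of j]] by (simp add: Bseq_eq_bounded)
  then obtain l s where s: "strict_mono s" and l: "((\<lambda>k. f (r k) j) \<circ> s) \<longlonglongrightarrow> l"
    using bounded_imp_convergent_subsequence by blast
  have "(\<lambda>k. f (r (s k)) i) \<longlonglongrightarrow> L i" if "i \<in> I" for i
    using LIMSEQ_subseq_LIMSEQ[OF L[rule_format, OF that] s] by (simp add: o_def)
  then have "\<forall>i\<in>insert j I. (\<lambda>k. f ((r \<circ> s) k) i) \<longlonglongrightarrow> (L(j := l)) i"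
    using l \<open>j \<notin> I\<close> by (auto simp: o_def)
  then show ?case using strict_mono_o[OF r s] by blast
qed

lemma Bseq_families_convergent_subseq:
  fixes f g h :: "nat \<Rightarrow> nat \<Rightarrow> real"
  assumes "\<forall>i<m1. Bseq (\<lambda>k. f k i)" "\<forall>i<m2. Bseq (\<lambda>k. g k i)" "\<forall>i<m3. Bseq (\<lambda>k. h k i)"
  shows "\<exists>r Lf Lg Lh. strict_mono r \<and> (\<forall>i<m1. (\<lambda>k. f (r k) i) \<longlonglongrightarrow> Lf i)
    \<and> (\<forall>i<m2. (\<lambda>k. g (r k) i) \<longlonglongrightarrow> Lg i) \<and> (\<forall>i<m3. (\<lambda>k. h (r k) i) \<longlonglongrightarrow> Lh i)"
proof -
  define F where "F k = case_sum (f k) (case_sum (g k) (h k))" for k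
  define I where "I = Inl ` {..<m1} \<union> Inr ` (Inl ` {..<m2} \<union> Inr ` {..<m3})"
  have "\<exists>r L. strict_mono r \<and> (\<forall>i\<in>I. (\<lambda>k. F (r k) i) \<longlonglongrightarrow> L i)"
    by (rule Bseq_family_convergent_subseq) (use assms in \<open>auto simp: I_def F_def\<close>)
  then obtain r L where r: "strict_mono r" and L: "\<forall>i\<in>I. (\<lambda>k. F (r k) i) \<longlonglongrightarrow> L i"
    by blast
  have "\<forall>i<m1. (\<lambda>k. f (r k) i) \<longlonglongrightarrow> (L \<circ> Inl) i"
    and "\<forall>i<m2. (\<lambda>k. g (r k) i) \<longlonglongrightarrow> (L \<circ> Inr \<circ> Inl) i"
    and "\<forall>i<m3. (\<lambda>k. h (r k) i) \<longlonglongrightarrow> (L \<circ> Inr \<circ> Inr) i"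
    using L by (simp_all add: I_def F_def ball_Un)
  with r show ?thesis by blast
qed

lemma unbounded_imp_subseq_gt_index:
  fixes M :: "nat \<Rightarrow> real"
  assumes "\<not> (\<exists>K B. \<forall>k\<ge>K. M k \<le> B)"
  shows "\<exists>r. strict_mono r \<and> (\<forall>k. real k < M (r k))"
proof -
  have "\<forall>K B. \<exists>k\<ge>K. B < M k"
    using assms by (auto simp: not_le)
  then have "\<exists>r. \<forall>k. real k < M (r k) \<and> r k < r (Suc k)"
  proof (intro dependent_nat_choice)
    fix x n
    obtain y where "Suc x \<le> y" "real (Suc n) < M y"
      using \<open>\<forall>K B. \<exists>k\<ge>K. B < M k\<close> by blast
    then show "\<exists>y. real (Suc n) < M y \<and> x < y"
      by auto
  qed (use \<open>\<forall>K B. \<exists>k\<ge>K. B < M k\<close> in auto)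
  then show ?thesis
    by (auto simp: strict_mono_Suc_iff)
qed

section \<open>Tangent cones\<close>

lemma gderiv_difference_quotient_tendsto:
  fixes \<phi> :: "'a::euclidean_space \<Rightarrow> real"
  assumes der: "GDERIV \<phi> x :> D" and zs: "zs \<longlonglongrightarrow> x" and t: "\<forall>k. 0 < t k"
    and w: "(\<lambda>k. (1 / t k) *\<^sub>R (zs k - x)) \<longlonglongrightarrow> d"
  shows "(\<lambda>k. (\<phi> (zs k) - \<phi> x) / t k) \<longlonglongrightarrow> D \<bullet> d"
proof -
  define \<rho> where "\<rho> h = norm (\<phi> (x + h) - \<phi> x - h \<bullet> D) / norm h" for h
  \<comment> \<open>\<open>\<rho> 0 = 0\<close> because \<open>a / 0 = 0\<close>, so the first-order remainder quotient is continuous at 0.\<close>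
  have "isCont \<rho> 0"
    using der unfolding gderiv_def has_derivative_at isCont_def \<rho>_def by simp
  then have "(\<lambda>k. \<rho> (zs k - x)) \<longlonglongrightarrow> \<rho> 0"
    using LIM_zero[OF zs] by (rule isCont_tendsto_compose)
  then have "(\<lambda>k. \<rho> (zs k - x) * norm ((1 / t k) *\<^sub>R (zs k - x))) \<longlonglongrightarrow> 0 * norm d"
    using w by (intro tendsto_intros) (simp add: \<rho>_def)
  moreover have "\<rho> (zs k - x) * norm ((1 / t k) *\<^sub>R (zs k - x))
      = norm ((\<phi> (zs k) - \<phi> x) / t k - ((1 / t k) *\<^sub>R (zs k - x)) \<bullet> D)" for k
    using t[rule_format, of k]
    by (cases "zs k = x") (simp_all add: \<rho>_def abs_divide flip: diff_divide_distrib)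
  ultimately have "(\<lambda>k. (\<phi> (zs k) - \<phi> x) / t k - ((1 / t k) *\<^sub>R (zs k - x)) \<bullet> D) \<longlonglongrightarrow> 0"
    by (simp add: tendsto_norm_zero_cancel)
  moreover have "(\<lambda>k. ((1 / t k) *\<^sub>R (zs k - x)) \<bullet> D) \<longlonglongrightarrow> d \<bullet> D"
    using w by (intro tendsto_intros)
  ultimately show ?thesis
    unfolding inner_commute[of D] by (rule Lim_transform[rotated])
qed

lemma tangent_cone_gderiv_nonpos:
  fixes \<phi> :: "'a::euclidean_space \<Rightarrow> real"
  assumes der: "GDERIV \<phi> x :> D" and d: "d \<in> tangent_cone X x" and "\<phi> x = 0"
    and near: "\<forall>\<^sub>F y in nhds x. y \<in> X \<longrightarrow> \<phi> y \<le> 0"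
  shows "D \<bullet> d \<le> 0"
proof -
  obtain zs t where X: "\<forall>k. zs k \<in> X" and zs: "zs \<longlonglongrightarrow> x" and t: "\<forall>k. 0 < t k"
    and w: "(\<lambda>k. (1 / t k) *\<^sub>R (zs k - x)) \<longlonglongrightarrow> d"
    using d unfolding tangent_cone_def by blast
  have "\<forall>\<^sub>F k in sequentially. (\<phi> (zs k) - \<phi> x) / t k \<le> 0"
    using eventually_compose_filterlim[OF near zs] X t \<open>\<phi> x = 0\<close>
    by (auto elim: eventually_mono simp: divide_nonpos_pos)
  with gderiv_difference_quotient_tendsto[OF der zs t w] show ?thesis
    by (rule tendsto_upperbound) simp
qed

lemma tangent_cone_gderiv_nonneg:
  fixes \<phi> :: "'a::euclidean_space \<Rightarrow> real"
  assumes "GDERIV \<phi> x :> D" "d \<in> tangent_cone X x" "\<phi> x = 0"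
    and "\<forall>\<^sub>F y in nhds x. y \<in> X \<longrightarrow> 0 \<le> \<phi> y"
  shows "0 \<le> D \<bullet> d"
  using tangent_cone_gderiv_nonpos[OF GDERIV_minus[OF assms(1)] assms(2)] assms(3,4) by simp

lemma tangent_cone_gderiv_zero:
  fixes \<phi> :: "'a::euclidean_space \<Rightarrow> real"
  assumes "GDERIV \<phi> x :> D" "d \<in> tangent_cone X x" "\<phi> x = 0"
    and "\<forall>\<^sub>F y in nhds x. y \<in> X \<longrightarrow> \<phi> y = 0"
  shows "D \<bullet> d = 0"
proof -
  have "D \<bullet> d \<le> 0"
    by (rule tangent_cone_gderiv_nonpos[OF assms(1-3)]) (use assms(4) in \<open>auto elim: eventually_mono\<close>)
  moreover have "0 \<le> D \<bullet> d"
    by (rule tangent_cone_gderiv_nonneg[OF assms(1-3)]) (use assms(4) in \<open>auto elim: eventually_mono\<close>)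
  ultimately show ?thesis
    by simp
qed

text \<open>The scalar \<open>c\<close> multiplies \<open>\<nabla>f\<close>: \<open>c = 1\<close> gives the stationarity residual of the MPCC and
  \<open>c = 0\<close> the linear dependence excluded by MPCC-MFCQ.\<close>

definition mpcc_lagrange_grad :: "('a::euclidean_space) mpcc \<Rightarrow> 'a \<Rightarrow> real
    \<Rightarrow> (nat \<Rightarrow> real) \<Rightarrow> (nat \<Rightarrow> real) \<Rightarrow> (nat \<Rightarrow> real) \<Rightarrow> (nat \<Rightarrow> real) \<Rightarrow> 'a" where
  "mpcc_lagrange_grad P z c lg lh lG lH =
     c *\<^sub>R grad (obj P) z + (\<Sum>i\<in>Ig P z. lg i *\<^sub>R grad (gc P i) z)
       + (\<Sum>i<nh P. lh i *\<^sub>R grad (hc P i) z)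
       - (\<Sum>i\<in>alpha P z \<union> beta P z. lG i *\<^sub>R grad (Gc P i) z)
       - (\<Sum>i\<in>gamma P z \<union> beta P z. lH i *\<^sub>R grad (Hc P i) z)"

lemma weak_stat_mult_iff:
  "weak_stat_mult P z lg lh lG lH \<longleftrightarrow>
     mpcc_feasible P z \<and> (\<forall>i\<in>Ig P z. 0 \<le> lg i) \<and> mpcc_lagrange_grad P z 1 lg lh lG lH = 0"
  by (simp add: weak_stat_mult_def mpcc_lagrange_grad_def)

lemma inner_mpcc_lagrange_grad:
  "mpcc_lagrange_grad P z c lg lh lG lH \<bullet> d =
     c * (grad (obj P) z \<bullet> d) + (\<Sum>i\<in>Ig P z. lg i * (grad (gc P i) z \<bullet> d))
       + (\<Sum>i<nh P. lh i * (grad (hc P i) z \<bullet> d))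
       - (\<Sum>i\<in>alpha P z \<union> beta P z. lG i * (grad (Gc P i) z \<bullet> d))
       - (\<Sum>i\<in>gamma P z \<union> beta P z. lH i * (grad (Hc P i) z \<bullet> d))"
  by (simp add: mpcc_lagrange_grad_def inner_add_left inner_diff_left inner_sum_left)

lemma MPCC_MFCQ_imp_multipliers_zero:
  fixes P :: "('a::euclidean_space) mpcc"
  assumes mfcq: "MPCC_MFCQ P z" and lg: "\<forall>i\<in>Ig P z. 0 \<le> lg i"
    and eq: "mpcc_lagrange_grad P z 0 lg lh lG lH = 0"
  shows "(\<forall>i\<in>Ig P z. lg i = 0) \<and> (\<forall>i<nh P. lh i = 0)
    \<and> (\<forall>i\<in>alpha P z \<union> beta P z. lG i = 0) \<and> (\<forall>i\<in>gamma P z \<union> beta P z. lH i = 0)"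
proof -
  obtain d where dh: "\<forall>i<nh P. grad (hc P i) z \<bullet> d = 0"
    and dG: "\<forall>i\<in>alpha P z \<union> beta P z. grad (Gc P i) z \<bullet> d = 0"
    and dH: "\<forall>i\<in>gamma P z \<union> beta P z. grad (Hc P i) z \<bullet> d = 0"
    and dg: "\<forall>i\<in>Ig P z. grad (gc P i) z \<bullet> d < 0"
    using mfcq unfolding MPCC_MFCQ_def by blast
  have "(\<Sum>i\<in>Ig P z. - (lg i * (grad (gc P i) z \<bullet> d))) = 0"
    using inner_mpcc_lagrange_grad[of P z 0 lg lh lG lH d] eq dh dG dH by (simp add: sum_negf)
  moreover have "\<forall>i\<in>Ig P z. 0 \<le> - (lg i * (grad (gc P i) z \<bullet> d))"
    using lg dg by (simp add: mult_nonneg_nonpos less_imp_le)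
  ultimately have "\<forall>i\<in>Ig P z. lg i * (grad (gc P i) z \<bullet> d) = 0"
    by (subst (asm) sum_nonneg_eq_0_iff) (auto simp: Ig_def)
  then have lg0: "\<forall>i\<in>Ig P z. lg i = 0"
    using dg by force
  then have "(\<Sum>i\<in>Ig P z. lg i *\<^sub>R grad (gc P i) z) = 0"
    by simp
  then have "(\<Sum>i<nh P. lh i *\<^sub>R grad (hc P i) z)
      + (\<Sum>i\<in>alpha P z \<union> beta P z. (- lG i) *\<^sub>R grad (Gc P i) z)
      + (\<Sum>i\<in>gamma P z \<union> beta P z. (- lH i) *\<^sub>R grad (Hc P i) z) = 0"
    using eq by (simp add: mpcc_lagrange_grad_def sum_negf)
  then have "(\<forall>i<nh P. lh i = 0) \<and> (\<forall>i\<in>alpha P z \<union> beta P z. - lG i = 0)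
      \<and> (\<forall>i\<in>gamma P z \<union> beta P z. - lH i = 0)"
    by (rule conjunct1[OF mfcq[unfolded MPCC_MFCQ_def], rule_format])
  with lg0 show ?thesis
    by simp
qed

lemma mpcc_feasible_index_cases:
  assumes "mpcc_feasible P z" "i < mc P"
  shows "i \<in> alpha P z \<or> i \<in> beta P z \<or> i \<in> gamma P z"
  using assms unfolding mpcc_feasible_def alpha_def beta_def gamma_def
  by (auto simp: less_le)

lemma sum_Phi_weight_split:
  assumes z: "mpcc_feasible P z"
    and \<theta>_alpha: "\<forall>i\<in>alpha P z. \<theta> i = 1" and \<theta>_gamma: "\<forall>i\<in>gamma P z. \<theta> i = 0"
  shows "(\<Sum>i<mc P. w i *\<^sub>R (\<theta> i *\<^sub>R grad (Gc P i) z + (1 - \<theta> i) *\<^sub>R grad (Hc P i) z)) =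
    (\<Sum>i\<in>alpha P z \<union> beta P z. (if i \<in> beta P z then w i * \<theta> i else w i) *\<^sub>R grad (Gc P i) z)
    + (\<Sum>i\<in>gamma P z \<union> beta P z. (if i \<in> beta P z then w i * (1 - \<theta> i) else w i) *\<^sub>R grad (Hc P i) z)"
proof -
  have "(\<Sum>i<mc P. (w i * \<theta> i) *\<^sub>R grad (Gc P i) z)
      = (\<Sum>i\<in>alpha P z \<union> beta P z. (w i * \<theta> i) *\<^sub>R grad (Gc P i) z)"
    using mpcc_feasible_index_cases[OF z] \<theta>_gamma
    by (intro sum.mono_neutral_right) (auto simp: alpha_def beta_def)
  also have "\<dots> = (\<Sum>i\<in>alpha P z \<union> beta P z.
      (if i \<in> beta P z then w i * \<theta> i else w i) *\<^sub>R grad (Gc P i) z)"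
    using \<theta>_alpha by (intro sum.cong) auto
  finally have G: "(\<Sum>i<mc P. (w i * \<theta> i) *\<^sub>R grad (Gc P i) z) = \<dots>" .
  have "(\<Sum>i<mc P. (w i * (1 - \<theta> i)) *\<^sub>R grad (Hc P i) z)
      = (\<Sum>i\<in>gamma P z \<union> beta P z. (w i * (1 - \<theta> i)) *\<^sub>R grad (Hc P i) z)"
    using mpcc_feasible_index_cases[OF z] \<theta>_alpha
    by (intro sum.mono_neutral_right) (auto simp: gamma_def beta_def)
  also have "\<dots> = (\<Sum>i\<in>gamma P z \<union> beta P z.
      (if i \<in> beta P z then w i * (1 - \<theta> i) else w i) *\<^sub>R grad (Hc P i) z)"
    using \<theta>_gamma by (intro sum.cong) auto
  finally have H: "(\<Sum>i<mc P. (w i * (1 - \<theta> i)) *\<^sub>R grad (Hc P i) z) = \<dots>" .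
  show ?thesis
    unfolding G[symmetric] H[symmetric] sum.distrib[symmetric]
    by (simp add: scaleR_add_right)
qed

section \<open>B-stationarity of S-stationary points\<close>

locale mpcc_C1 =
  fixes P :: "('a::euclidean_space) mpcc"
  assumes C1_obj: "C1_fun (obj P)"
    and C1_gc: "\<forall>i<ng P. C1_fun (gc P i)"
    and C1_hc: "\<forall>i<nh P. C1_fun (hc P i)"
    and C1_Gc: "\<forall>i<mc P. C1_fun (Gc P i)"
    and C1_Hc: "\<forall>i<mc P. C1_fun (Hc P i)"
begin

lemma tangent_cone_linearized:
  assumes z: "mpcc_feasible P z" and d: "d \<in> tangent_cone (mpcc_set P) z"
  shows "(\<forall>i\<in>Ig P z. grad (gc P i) z \<bullet> d \<le> 0) \<and> (\<forall>i<nh P. grad (hc P i) z \<bullet> d = 0)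
    \<and> (\<forall>i\<in>alpha P z. grad (Gc P i) z \<bullet> d = 0) \<and> (\<forall>i\<in>gamma P z. grad (Hc P i) z \<bullet> d = 0)
    \<and> (\<forall>i\<in>beta P z. 0 \<le> grad (Gc P i) z \<bullet> d \<and> 0 \<le> grad (Hc P i) z \<bullet> d)"
proof (intro conjI ballI allI impI)
  fix i
  assume "i \<in> Ig P z"
  then show "grad (gc P i) z \<bullet> d \<le> 0"
    using C1_gc by (intro tangent_cone_gderiv_nonpos[OF C1_fun_has_gradient d] always_eventually)
      (auto simp: Ig_def mpcc_set_def mpcc_feasible_def)
next
  fix i
  assume "i < nh P"
  then show "grad (hc P i) z \<bullet> d = 0"
    using C1_hc z by (intro tangent_cone_gderiv_zero[OF C1_fun_has_gradient d] always_eventually)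
      (auto simp: mpcc_set_def mpcc_feasible_def)
next
  fix i
  assume i: "i \<in> alpha P z"
  then have "\<forall>\<^sub>F y in nhds z. 0 < Hc P i y"
    using C1_Hc by (intro C1_fun_eventually_pos) (auto simp: alpha_def)
  then have "\<forall>\<^sub>F y in nhds z. y \<in> mpcc_set P \<longrightarrow> Gc P i y = 0"
    using i by (auto elim!: eventually_mono simp: alpha_def mpcc_set_def mpcc_feasible_def)
  with i show "grad (Gc P i) z \<bullet> d = 0"
    using C1_Gc by (intro tangent_cone_gderiv_zero[OF C1_fun_has_gradient d]) (auto simp: alpha_def)
next
  fix i
  assume i: "i \<in> gamma P z"
  then have "\<forall>\<^sub>F y in nhds z. 0 < Gc P i y"
    using C1_Gc by (intro C1_fun_eventually_pos) (auto simp: gamma_def)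
  then have "\<forall>\<^sub>F y in nhds z. y \<in> mpcc_set P \<longrightarrow> Hc P i y = 0"
    using i by (auto elim!: eventually_mono simp: gamma_def mpcc_set_def mpcc_feasible_def)
  with i show "grad (Hc P i) z \<bullet> d = 0"
    using C1_Hc by (intro tangent_cone_gderiv_zero[OF C1_fun_has_gradient d]) (auto simp: gamma_def)
next
  fix i
  assume "i \<in> beta P z"
  then show "0 \<le> grad (Gc P i) z \<bullet> d" and "0 \<le> grad (Hc P i) z \<bullet> d"
    using C1_Gc C1_Hc
    by (auto intro!: tangent_cone_gderiv_nonneg[OF C1_fun_has_gradient d] always_eventually
        simp: beta_def mpcc_set_def mpcc_feasible_def)
qed

lemma S_stat_mult_imp_B_stationary:
  assumes "S_stat_mult P z lg lh lG lH"
  shows "B_stationary P z"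
proof -
  have z: "mpcc_feasible P z" and lg: "\<forall>i\<in>Ig P z. 0 \<le> lg i"
    and eq: "mpcc_lagrange_grad P z 1 lg lh lG lH = 0"
    and lGH: "\<forall>i\<in>beta P z. 0 \<le> lG i \<and> 0 \<le> lH i"
    using assms unfolding S_stat_mult_def weak_stat_mult_iff by auto
  show ?thesis
    unfolding B_stationary_def
  proof (intro conjI ballI z)
    fix d
    assume "d \<in> tangent_cone (mpcc_set P) z"
    note cone = tangent_cone_linearized[OF z this]
    have "(\<Sum>i\<in>Ig P z. lg i * (grad (gc P i) z \<bullet> d)) \<le> 0"
      using cone lg by (intro sum_nonpos) (simp add: mult_nonneg_nonpos)
    moreover have "(\<Sum>i<nh P. lh i * (grad (hc P i) z \<bullet> d)) = 0"
      using cone by simp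
    moreover have "0 \<le> (\<Sum>i\<in>alpha P z \<union> beta P z. lG i * (grad (Gc P i) z \<bullet> d))"
      using cone lGH by (intro sum_nonneg) auto
    moreover have "0 \<le> (\<Sum>i\<in>gamma P z \<union> beta P z. lH i * (grad (Hc P i) z \<bullet> d))"
      using cone lGH by (intro sum_nonneg) auto
    ultimately show "0 \<le> grad (obj P) z \<bullet> d"
      using inner_mpcc_lagrange_grad[of P z 1 lg lh lG lH d] eq by simp
  qed
qed

end

section \<open>Limit points of the Bounding Algorithm\<close>

locale bounding_alg_run = mpcc_C1 P for P :: "('a::euclidean_space) mpcc" +
  fixes \<kappa> :: real and eps :: "nat \<Rightarrow> real" and p :: "nat \<Rightarrow> nat \<Rightarrow> real"
    and z :: "nat \<Rightarrow> 'a" and zbar :: 'a and ug uh uP :: "nat \<Rightarrow> nat \<Rightarrow> real"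
  assumes alg: "bounding_alg P \<kappa> eps p z ug uh uP"
    and z_tendsto: "z \<longlonglongrightarrow> zbar"
begin

lemma kappa_bounds: "0 < \<kappa>" "\<kappa> < 1"
  and eps_0_pos: "0 < eps 0"
  and eps_Suc: "eps (Suc k) = \<kappa> * eps k"
  and p_0: "p 0 i = 0"
  and p_Suc: "p (Suc k) i = (if p k i = 0 \<and> 0 < uP k i then eps (Suc k) / 2
      else if p k i = eps k / 2 \<and> uP k i < 0 then 0 else \<kappa> * p k i)"
  and KKT: "BA_KKT (eps k) (p k) P (z k) (ug k) (uh k) (uP k)"
  using alg unfolding bounding_alg_def by blast+

lemma ug_nonneg: "i < ng P \<Longrightarrow> 0 \<le> ug k i"
  and ug_inactive: "i < ng P \<Longrightarrow> i \<notin> Ig P (z k) \<Longrightarrow> ug k i = 0"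
  and KKT_grad: "grad (obj P) (z k) + (\<Sum>i\<in>Ig P (z k). ug k i *\<^sub>R grad (gc P i) (z k))
       + (\<Sum>i<nh P. uh k i *\<^sub>R grad (hc P i) (z k))
       - (\<Sum>i<mc P. uP k i *\<^sub>R grad (Phi (eps k) P i) (z k)) = 0"
  using KKT[of k] unfolding BA_KKT_def by blast+

lemma eps_eq: "eps k = \<kappa> ^ k * eps 0"
  by (induction k) (simp_all add: eps_Suc)

lemma eps_pos: "0 < eps k"
  using kappa_bounds eps_0_pos by (induction k) (simp_all add: eps_Suc)

lemma eps_tendsto_0: "eps \<longlonglongrightarrow> 0"
proof -
  have "(\<lambda>k. \<kappa> ^ k * eps 0) \<longlonglongrightarrow> 0 * eps 0"
    using kappa_bounds by (intro tendsto_intros LIMSEQ_power_zero) auto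
  moreover have "eps = (\<lambda>k. \<kappa> ^ k * eps 0)"
    using eps_eq by blast
  ultimately show ?thesis
    by simp
qed

lemma p_bounds: "0 \<le> p k i \<and> p k i \<le> eps k / 2"
proof (induction k)
  case 0
  then show ?case
    using eps_pos[of 0] by (simp add: p_0)
next
  case (Suc k)
  then show ?case
    using eps_pos[of "Suc k"] kappa_bounds by (simp add: p_Suc eps_Suc)
qed

lemma p_tendsto_0: "(\<lambda>k. p k i) \<longlonglongrightarrow> 0"
proof (rule tendsto_sandwich[of "\<lambda>k. 0" _ _ "\<lambda>k. eps k / 2"])
  show "\<forall>\<^sub>F k in sequentially. 0 \<le> p k i" and "\<forall>\<^sub>F k in sequentially. p k i \<le> eps k / 2"
    using p_bounds by (simp_all add: always_eventually)
  show "(\<lambda>k. eps k / 2) \<longlonglongrightarrow> 0"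
    using tendsto_divide_zero[OF eps_tendsto_0] .
qed simp

lemma z_BA_feasible:
  "i < ng P \<Longrightarrow> gc P i (z k) \<le> 0"
  "i < nh P \<Longrightarrow> hc P i (z k) = 0"
  "i < mc P \<Longrightarrow> Phi (eps k) P i (z k) = - p k i"
proof -
  have "BA_feasible (eps k) (p k) P (z k)"
    using KKT unfolding BA_KKT_def by blast
  then show "i < ng P \<Longrightarrow> gc P i (z k) \<le> 0" "i < nh P \<Longrightarrow> hc P i (z k) = 0"
    "i < mc P \<Longrightarrow> Phi (eps k) P i (z k) = - p k i"
    unfolding BA_feasible_def by (simp_all add: eq_neg_iff_add_eq_0)
qed

lemma zbar_feasible: "mpcc_feasible P zbar"
proof -
  have "gc P i zbar \<le> 0" if i: "i < ng P" for i
    using C1_gc i z_BA_feasible(1)[OF i]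
    by (intro tendsto_upperbound[OF C1_fun_tendsto[OF _ z_tendsto]] always_eventually) auto
  moreover have "hc P i zbar = 0" if i: "i < nh P" for i
  proof -
    have "(\<lambda>k. hc P i (z k)) \<longlonglongrightarrow> hc P i zbar"
      using C1_hc i by (intro C1_fun_tendsto[OF _ z_tendsto]) auto
    then show ?thesis
      using z_BA_feasible(2)[OF i] by (simp add: LIMSEQ_const_iff)
  qed
  moreover have "0 \<le> Gc P i zbar \<and> 0 \<le> Hc P i zbar \<and> Gc P i zbar * Hc P i zbar = 0"
    if i: "i < mc P" for i
  proof -
    have "(\<lambda>k. Phi (eps k) P i (z k)) \<longlonglongrightarrow> min (Gc P i zbar) (Hc P i zbar)"
      unfolding Phi_def using C1_Gc C1_Hc i
      by (intro smoothed_min_tendsto C1_fun_tendsto[OF _ z_tendsto] eps_tendsto_0) auto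
    moreover have "(\<lambda>k. Phi (eps k) P i (z k)) \<longlonglongrightarrow> 0"
      using tendsto_minus[OF p_tendsto_0] by (simp add: z_BA_feasible(3)[OF i])
    ultimately have "min (Gc P i zbar) (Hc P i zbar) = 0"
      by (rule LIMSEQ_unique)
    then show ?thesis
      unfolding min_eq_0_iff .
  qed
  ultimately show ?thesis
    unfolding mpcc_feasible_def by blast
qed

lemma Gc_tendsto: "i < mc P \<Longrightarrow> (\<lambda>k. Gc P i (z k)) \<longlonglongrightarrow> Gc P i zbar"
  and Hc_tendsto: "i < mc P \<Longrightarrow> (\<lambda>k. Hc P i (z k)) \<longlonglongrightarrow> Hc P i zbar"
  using C1_Gc C1_Hc by (simp_all add: C1_fun_tendsto[OF _ z_tendsto])

lemma ug_eventually_zero: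
  assumes i: "i < ng P" "i \<notin> Ig P zbar"
  shows "\<forall>\<^sub>F k in sequentially. ug k i = 0"
proof -
  have "gc P i zbar < 0"
    using zbar_feasible i unfolding mpcc_feasible_def Ig_def by force
  moreover have "(\<lambda>k. gc P i (z k)) \<longlonglongrightarrow> gc P i zbar"
    using C1_gc i by (simp add: C1_fun_tendsto[OF _ z_tendsto])
  ultimately have "\<forall>\<^sub>F k in sequentially. gc P i (z k) < 0"
    by (simp add: order_tendstoD(2))
  then show ?thesis
    by (rule eventually_mono) (use i in \<open>auto intro: ug_inactive simp: Ig_def\<close>)
qed

lemma Phi_weight_tendsto:
  assumes "i < mc P" "Gc P i zbar \<noteq> Hc P i zbar"
  shows "(\<lambda>k. Phi_weight (eps k) P i (z k)) \<longlonglongrightarrow> (if Gc P i zbar < Hc P i zbar then 1 else 0)"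
  unfolding Phi_weight_def using assms
  by (intro smoothed_min_weight_tendsto Gc_tendsto Hc_tendsto eps_tendsto_0)

lemma KKT_expanded:
  "grad (obj P) (z k) + (\<Sum>i<ng P. ug k i *\<^sub>R grad (gc P i) (z k))
     + (\<Sum>i<nh P. uh k i *\<^sub>R grad (hc P i) (z k))
     - (\<Sum>i<mc P. uP k i *\<^sub>R (Phi_weight (eps k) P i (z k) *\<^sub>R grad (Gc P i) (z k)
          + (1 - Phi_weight (eps k) P i (z k)) *\<^sub>R grad (Hc P i) (z k))) = 0"
proof -
  have "(\<Sum>i\<in>Ig P (z k). ug k i *\<^sub>R grad (gc P i) (z k)) = (\<Sum>i<ng P. ug k i *\<^sub>R grad (gc P i) (z k))"
    by (rule sum.mono_neutral_left) (auto simp: Ig_def ug_inactive)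
  moreover have "(\<Sum>i<mc P. uP k i *\<^sub>R grad (Phi (eps k) P i) (z k)) =
      (\<Sum>i<mc P. uP k i *\<^sub>R (Phi_weight (eps k) P i (z k) *\<^sub>R grad (Gc P i) (z k)
          + (1 - Phi_weight (eps k) P i (z k)) *\<^sub>R grad (Hc P i) (z k)))"
  proof (rule sum.cong[OF refl])
    fix i
    assume "i \<in> {..<mc P}"
    then have "Gc P i differentiable (at (z k))" "Hc P i differentiable (at (z k))"
      using C1_Gc C1_Hc unfolding C1_fun_def by auto
    from grad_eqI[OF has_gradient_Phi[OF this]] eps_pos[of k]
    show "uP k i *\<^sub>R grad (Phi (eps k) P i) (z k) = uP k i *\<^sub>R (Phi_weight (eps k) P i (z k) *\<^sub>R grad (Gc P i) (z k)
          + (1 - Phi_weight (eps k) P i (z k)) *\<^sub>R grad (Hc P i) (z k))"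
      by simp
  qed
  ultimately show ?thesis
    using KKT_grad[of k] by simp
qed

lemma scaled_KKT_tendsto:
  assumes r: "strict_mono r" and c: "c \<longlonglongrightarrow> c0"
    and wg: "\<forall>i<ng P. (\<lambda>k. c k * ug (r k) i) \<longlonglongrightarrow> wg i"
    and wh: "\<forall>i<nh P. (\<lambda>k. c k * uh (r k) i) \<longlonglongrightarrow> wh i"
    and wP: "\<forall>i<mc P. (\<lambda>k. c k * uP (r k) i) \<longlonglongrightarrow> wP i"
    and \<theta>: "\<forall>i<mc P. (\<lambda>k. Phi_weight (eps (r k)) P i (z (r k))) \<longlonglongrightarrow> \<theta> i"
  shows "c0 *\<^sub>R grad (obj P) zbar + (\<Sum>i<ng P. wg i *\<^sub>R grad (gc P i) zbar)
     + (\<Sum>i<nh P. wh i *\<^sub>R grad (hc P i) zbar)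
     - (\<Sum>i<mc P. wP i *\<^sub>R (\<theta> i *\<^sub>R grad (Gc P i) zbar + (1 - \<theta> i) *\<^sub>R grad (Hc P i) zbar)) = 0"
    (is "?lim = 0")
proof -
  define a where "a k i = Phi_weight (eps (r k)) P i (z (r k))" for k i
  have zr: "(\<lambda>k. z (r k)) \<longlonglongrightarrow> zbar"
    using LIMSEQ_subseq_LIMSEQ[OF z_tendsto r] by (simp add: o_def)
  have "(\<lambda>k. c k *\<^sub>R grad (obj P) (z (r k))
      + (\<Sum>i<ng P. (c k * ug (r k) i) *\<^sub>R grad (gc P i) (z (r k)))
      + (\<Sum>i<nh P. (c k * uh (r k) i) *\<^sub>R grad (hc P i) (z (r k)))
      - (\<Sum>i<mc P. (c k * uP (r k) i) *\<^sub>R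
          (a k i *\<^sub>R grad (Gc P i) (z (r k)) + (1 - a k i) *\<^sub>R grad (Hc P i) (z (r k)))))
      \<longlonglongrightarrow> ?lim"
    using wg wh wP \<theta> C1_obj C1_gc C1_hc C1_Gc C1_Hc unfolding a_def
    by (intro tendsto_intros tendsto_sum C1_fun_grad_tendsto[OF _ zr] c) auto
  moreover have "c k *\<^sub>R grad (obj P) (z (r k))
      + (\<Sum>i<ng P. (c k * ug (r k) i) *\<^sub>R grad (gc P i) (z (r k)))
      + (\<Sum>i<nh P. (c k * uh (r k) i) *\<^sub>R grad (hc P i) (z (r k)))
      - (\<Sum>i<mc P. (c k * uP (r k) i) *\<^sub>R
          (a k i *\<^sub>R grad (Gc P i) (z (r k)) + (1 - a k i) *\<^sub>R grad (Hc P i) (z (r k)))) = 0" for k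
    using arg_cong[OF KKT_expanded[of "r k"], of "scaleR (c k)"] unfolding a_def
    by (simp add: scaleR_add_right scaleR_diff_right scaleR_sum_right mult.assoc)
  ultimately show ?thesis
    using LIMSEQ_unique by fastforce
qed

lemma Phi_weight_subseq_limit:
  assumes q: "strict_mono q" and i: "i < mc P"
    and \<theta>: "(\<lambda>k. Phi_weight (eps (q k)) P i (z (q k))) \<longlonglongrightarrow> \<theta>"
  shows "0 \<le> \<theta> \<and> \<theta> \<le> 1" and "i \<in> alpha P zbar \<Longrightarrow> \<theta> = 1" and "i \<in> gamma P zbar \<Longrightarrow> \<theta> = 0"
proof -
  show "0 \<le> \<theta> \<and> \<theta> \<le> 1"
    using Phi_weight_bounds
    by (intro conjI tendsto_lowerbound[OF \<theta>] tendsto_upperbound[OF \<theta>] always_eventually) auto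
  have lim: "\<theta> = (if Gc P i zbar < Hc P i zbar then 1 else 0)" if "Gc P i zbar \<noteq> Hc P i zbar"
    using LIMSEQ_subseq_LIMSEQ[OF Phi_weight_tendsto[OF i that] q] \<theta>
    by (simp add: o_def LIMSEQ_unique)
  show "i \<in> alpha P zbar \<Longrightarrow> \<theta> = 1" and "i \<in> gamma P zbar \<Longrightarrow> \<theta> = 0"
    using lim by (auto simp: alpha_def gamma_def)
qed

lemma scaled_ug_limit:
  assumes q: "strict_mono q" and c: "\<forall>k. 0 \<le> c k" and i: "i < ng P"
    and w: "(\<lambda>k. c k * ug (q k) i) \<longlonglongrightarrow> w"
  shows "0 \<le> w" and "i \<notin> Ig P zbar \<Longrightarrow> w = 0"
proof -
  show "0 \<le> w"
    using c ug_nonneg[OF i]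
    by (intro tendsto_lowerbound[OF w] always_eventually) auto
  assume "i \<notin> Ig P zbar"
  then have "\<forall>\<^sub>F k in sequentially. c k * ug (q k) i = 0"
    using eventually_compose_filterlim[OF ug_eventually_zero[OF i] filterlim_subseq[OF q]]
    by (auto elim: eventually_mono)
  then have "(\<lambda>k. c k * ug (q k) i) \<longlonglongrightarrow> 0"
    by (rule tendsto_eventually)
  with w show "w = 0"
    by (rule LIMSEQ_unique)
qed

lemma scaled_KKT_limit:
  assumes r: "strict_mono r" and c_nonneg: "\<forall>k. 0 \<le> c k" and c: "c \<longlonglongrightarrow> c0"
    and wg: "\<forall>i<ng P. (\<lambda>k. c k * ug (r k) i) \<longlonglongrightarrow> wg i"
    and wh: "\<forall>i<nh P. (\<lambda>k. c k * uh (r k) i) \<longlonglongrightarrow> wh i"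
    and wP: "\<forall>i<mc P. (\<lambda>k. c k * uP (r k) i) \<longlonglongrightarrow> wP i"
  shows "\<exists>\<theta>. (\<forall>i\<in>beta P zbar. 0 \<le> \<theta> i \<and> \<theta> i \<le> 1)
    \<and> (\<forall>i<ng P. 0 \<le> wg i \<and> (i \<notin> Ig P zbar \<longrightarrow> wg i = 0))
    \<and> mpcc_lagrange_grad P zbar c0 wg wh
        (\<lambda>i. if i \<in> beta P zbar then wP i * \<theta> i else wP i)
        (\<lambda>i. if i \<in> beta P zbar then wP i * (1 - \<theta> i) else wP i) = 0"
proof -
  have "Bseq (\<lambda>k. Phi_weight (eps (r k)) P i (z (r k)))" for i
    by (rule BseqI'[where K = 1]) (simp add: abs_Phi_weight_le_1)
  then obtain s \<theta> where s: "strict_mono s"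
    and \<theta>: "\<forall>i\<in>{..<mc P}. (\<lambda>k. Phi_weight (eps (r (s k))) P i (z (r (s k)))) \<longlonglongrightarrow> \<theta> i"
    using Bseq_family_convergent_subseq[of "{..<mc P}" "\<lambda>k i. Phi_weight (eps (r k)) P i (z (r k))"]
    by blast
  define q where "q = r \<circ> s"
  have q: "strict_mono q"
    unfolding q_def using r s by (rule strict_mono_o)
  have sub: "(\<lambda>k. X (s k)) \<longlonglongrightarrow> L" if "X \<longlonglongrightarrow> L" for X :: "nat \<Rightarrow> real" and L
    using LIMSEQ_subseq_LIMSEQ[OF that s] by (simp add: o_def)
  have wg': "\<forall>i<ng P. (\<lambda>k. c (s k) * ug (q k) i) \<longlonglongrightarrow> wg i"
    using sub[OF wg[rule_format]] by (simp add: q_def)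
  have wh': "\<forall>i<nh P. (\<lambda>k. c (s k) * uh (q k) i) \<longlonglongrightarrow> wh i"
    using sub[OF wh[rule_format]] by (simp add: q_def)
  have wP': "\<forall>i<mc P. (\<lambda>k. c (s k) * uP (q k) i) \<longlonglongrightarrow> wP i"
    using sub[OF wP[rule_format]] by (simp add: q_def)
  have c': "(\<lambda>k. c (s k)) \<longlonglongrightarrow> c0"
    using sub[OF c] .
  have \<theta>': "\<forall>i<mc P. (\<lambda>k. Phi_weight (eps (q k)) P i (z (q k))) \<longlonglongrightarrow> \<theta> i"
    using \<theta> by (simp add: q_def)
  note raw = scaled_KKT_tendsto[OF q c' wg' wh' wP' \<theta>']
  have \<theta>_bounds: "\<forall>i\<in>beta P zbar. 0 \<le> \<theta> i \<and> \<theta> i \<le> 1"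
    and \<theta>_alpha: "\<forall>i\<in>alpha P zbar. \<theta> i = 1" and \<theta>_gamma: "\<forall>i\<in>gamma P zbar. \<theta> i = 0"
    using Phi_weight_subseq_limit[OF q _ \<theta>'[rule_format]] by (auto simp: alpha_def beta_def gamma_def)
  have wg_props: "\<forall>i<ng P. 0 \<le> wg i \<and> (i \<notin> Ig P zbar \<longrightarrow> wg i = 0)"
    using scaled_ug_limit[OF q _ _ wg'[rule_format]] c_nonneg by blast
  have "(\<Sum>i<ng P. wg i *\<^sub>R grad (gc P i) zbar) = (\<Sum>i\<in>Ig P zbar. wg i *\<^sub>R grad (gc P i) zbar)"
    using wg_props by (intro sum.mono_neutral_right) (auto simp: Ig_def)
  with raw sum_Phi_weight_split[OF zbar_feasible \<theta>_alpha \<theta>_gamma, of wP]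
  have "mpcc_lagrange_grad P zbar c0 wg wh
      (\<lambda>i. if i \<in> beta P zbar then wP i * \<theta> i else wP i)
      (\<lambda>i. if i \<in> beta P zbar then wP i * (1 - \<theta> i) else wP i) = 0"
    unfolding mpcc_lagrange_grad_def diff_diff_eq by simp
  with \<theta>_bounds wg_props show ?thesis
    by blast
qed

definition mult_norm :: "nat \<Rightarrow> real" where
  "mult_norm k = (\<Sum>i<ng P. \<bar>ug k i\<bar>) + (\<Sum>i<nh P. \<bar>uh k i\<bar>) + (\<Sum>i<mc P. \<bar>uP k i\<bar>)"

lemma abs_multipliers_le_mult_norm:
  "i < ng P \<Longrightarrow> \<bar>ug k i\<bar> \<le> mult_norm k"
  "i < nh P \<Longrightarrow> \<bar>uh k i\<bar> \<le> mult_norm k"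
  "i < mc P \<Longrightarrow> \<bar>uP k i\<bar> \<le> mult_norm k"
proof -
  have le: "\<bar>f i\<bar> \<le> (\<Sum>j<n. \<bar>f j\<bar>)" if "i < n" for f :: "nat \<Rightarrow> real" and n
    using that by (intro member_le_sum) auto
  have nonneg: "0 \<le> (\<Sum>j<n. \<bar>f j\<bar>)" for f :: "nat \<Rightarrow> real" and n
    by (simp add: sum_nonneg)
  show "\<bar>ug k i\<bar> \<le> mult_norm k" if "i < ng P"
    using le[OF that, where f = "ug k"] nonneg[where n = "nh P" and f = "uh k"] nonneg[where n = "mc P" and f = "uP k"]
    unfolding mult_norm_def by linarith
  show "\<bar>uh k i\<bar> \<le> mult_norm k" if "i < nh P"
    using le[OF that, where f = "uh k"] nonneg[where n = "ng P" and f = "ug k"] nonneg[where n = "mc P" and f = "uP k"]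
    unfolding mult_norm_def by linarith
  show "\<bar>uP k i\<bar> \<le> mult_norm k" if "i < mc P"
    using le[OF that, where f = "uP k"] nonneg[where n = "ng P" and f = "ug k"] nonneg[where n = "nh P" and f = "uh k"]
    unfolding mult_norm_def by linarith
qed

lemma scaled_multiplier_limits_vanish:
  assumes mfcq: "MPCC_MFCQ P zbar"
    and r: "strict_mono r" and c_nonneg: "\<forall>k. 0 \<le> c k" and c: "c \<longlonglongrightarrow> 0"
    and wg: "\<forall>i<ng P. (\<lambda>k. c k * ug (r k) i) \<longlonglongrightarrow> wg i"
    and wh: "\<forall>i<nh P. (\<lambda>k. c k * uh (r k) i) \<longlonglongrightarrow> wh i"
    and wP: "\<forall>i<mc P. (\<lambda>k. c k * uP (r k) i) \<longlonglongrightarrow> wP i"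
  shows "(\<forall>i<ng P. wg i = 0) \<and> (\<forall>i<nh P. wh i = 0) \<and> (\<forall>i<mc P. wP i = 0)"
proof -
  obtain \<theta> where wg_props: "\<forall>i<ng P. 0 \<le> wg i \<and> (i \<notin> Ig P zbar \<longrightarrow> wg i = 0)"
    and eq: "mpcc_lagrange_grad P zbar 0 wg wh
        (\<lambda>i. if i \<in> beta P zbar then wP i * \<theta> i else wP i)
        (\<lambda>i. if i \<in> beta P zbar then wP i * (1 - \<theta> i) else wP i) = 0"
    using scaled_KKT_limit[OF r c_nonneg c wg wh wP] by blast
  have "\<forall>i\<in>Ig P zbar. 0 \<le> wg i"
    using wg_props by (simp add: Ig_def)
  note zero = MPCC_MFCQ_imp_multipliers_zero[OF mfcq this eq]
  have "wP i = 0" if i: "i < mc P" for i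
  proof -
    have G: "(if i \<in> beta P zbar then wP i * \<theta> i else wP i) = 0" if "i \<in> alpha P zbar \<union> beta P zbar"
      using zero that by blast
    have H: "(if i \<in> beta P zbar then wP i * (1 - \<theta> i) else wP i) = 0"
      if "i \<in> gamma P zbar \<union> beta P zbar"
      using zero that by blast
    consider "i \<in> alpha P zbar" | "i \<in> beta P zbar" | "i \<in> gamma P zbar"
      using mpcc_feasible_index_cases[OF zbar_feasible i] by blast
    then show ?thesis
    proof cases
      case 1
      then show ?thesis
        using G by (auto simp: alpha_def beta_def)
    next
      case 2
      with G H show ?thesis
        by auto
    next
      case 3
      then show ?thesis
        using H by (auto simp: gamma_def beta_def)
    qed
  qed
  moreover have "wg i = 0" if "i < ng P" for i
    using zero wg_props that by (cases "i \<in> Ig P zbar") auto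
  ultimately show ?thesis
    using zero by blast
qed

lemma mult_norm_eventually_bounded:
  assumes mfcq: "MPCC_MFCQ P zbar"
  shows "\<exists>K B. \<forall>k\<ge>K. mult_norm k \<le> B"
proof (rule ccontr)
  assume "\<not> (\<exists>K B. \<forall>k\<ge>K. mult_norm k \<le> B)"
  then obtain r where r: "strict_mono r" and big: "\<forall>k. real k < mult_norm (r k)"
    using unbounded_imp_subseq_gt_index by blast
  \<comment> \<open>normalise the multipliers by their size; MFCQ then forbids a nonzero limit\<close>
  define c where "c k = inverse (mult_norm (r k))" for k
  have M_pos: "0 < mult_norm (r k)" for k
    using big of_nat_0_le_iff le_less_trans by blast
  then have c_pos: "0 < c k" and c_M: "c k * mult_norm (r k) = 1" for k
    using less_imp_neq[OF M_pos[of k]] by (simp_all add: c_def)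
  have "filterlim (\<lambda>k. mult_norm (r k)) at_top sequentially"
    using big by (intro filterlim_at_top_mono[OF filterlim_real_sequentially] always_eventually)
      (auto intro: less_imp_le)
  then have c_0: "c \<longlonglongrightarrow> 0"
    unfolding c_def by (rule tendsto_inverse_0_at_top)
  have bounded: "\<bar>c k * x\<bar> \<le> 1" if "\<bar>x\<bar> \<le> mult_norm (r k)" for k x
  proof -
    have "\<bar>c k * x\<bar> = c k * \<bar>x\<bar>"
      using c_pos[of k] by (simp add: abs_mult)
    also have "\<dots> \<le> c k * mult_norm (r k)"
      using that c_pos[of k] by (simp add: mult_left_mono)
    finally show ?thesis
      by (simp add: c_M)
  qed
  have "\<forall>i<ng P. Bseq (\<lambda>k. c k * ug (r k) i)" "\<forall>i<nh P. Bseq (\<lambda>k. c k * uh (r k) i)"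
    "\<forall>i<mc P. Bseq (\<lambda>k. c k * uP (r k) i)"
    using bounded abs_multipliers_le_mult_norm by (auto intro!: BseqI'[where K = 1])
  then obtain s wg wh wP where s: "strict_mono s"
    and wg: "\<forall>i<ng P. (\<lambda>k. c (s k) * ug (r (s k)) i) \<longlonglongrightarrow> wg i"
    and wh: "\<forall>i<nh P. (\<lambda>k. c (s k) * uh (r (s k)) i) \<longlonglongrightarrow> wh i"
    and wP: "\<forall>i<mc P. (\<lambda>k. c (s k) * uP (r (s k)) i) \<longlonglongrightarrow> wP i"
    using Bseq_families_convergent_subseq[of "ng P" "\<lambda>k i. c k * ug (r k) i"
        "nh P" "\<lambda>k i. c k * uh (r k) i" "mc P" "\<lambda>k i. c k * uP (r k) i"]
    by blast
  have rs: "strict_mono (\<lambda>k. r (s k))"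
    using strict_mono_o[OF r s] by (simp add: o_def)
  have "(\<lambda>k. c (s k)) \<longlonglongrightarrow> 0"
    using LIMSEQ_subseq_LIMSEQ[OF c_0 s] by (simp add: o_def)
  with rs c_pos have zero: "(\<forall>i<ng P. wg i = 0) \<and> (\<forall>i<nh P. wh i = 0) \<and> (\<forall>i<mc P. wP i = 0)"
    by (intro scaled_multiplier_limits_vanish[OF mfcq _ _ _ wg wh wP]) (auto intro: less_imp_le)
  have "(\<lambda>k. (\<Sum>i<ng P. \<bar>c (s k) * ug (r (s k)) i\<bar>) + (\<Sum>i<nh P. \<bar>c (s k) * uh (r (s k)) i\<bar>)
      + (\<Sum>i<mc P. \<bar>c (s k) * uP (r (s k)) i\<bar>))
      \<longlonglongrightarrow> (\<Sum>i<ng P. \<bar>wg i\<bar>) + (\<Sum>i<nh P. \<bar>wh i\<bar>) + (\<Sum>i<mc P. \<bar>wP i\<bar>)"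
    using wg wh wP by (intro tendsto_intros tendsto_sum) auto
  moreover have "(\<Sum>i<ng P. \<bar>c (s k) * ug (r (s k)) i\<bar>) + (\<Sum>i<nh P. \<bar>c (s k) * uh (r (s k)) i\<bar>)
      + (\<Sum>i<mc P. \<bar>c (s k) * uP (r (s k)) i\<bar>) = c (s k) * mult_norm (r (s k))" for k
    using c_pos[of "s k"] by (simp add: mult_norm_def abs_mult sum_distrib_left distrib_left)
  ultimately have "(\<Sum>i<ng P. \<bar>wg i\<bar>) + (\<Sum>i<nh P. \<bar>wh i\<bar>) + (\<Sum>i<mc P. \<bar>wP i\<bar>) = 1"
    by (simp add: c_M LIMSEQ_const_iff)
  with zero show False
    by simp
qed

lemma multipliers_eventually_bounded:
  assumes "MPCC_MFCQ P zbar"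
  shows "\<exists>K B. \<forall>k\<ge>K. (\<forall>i<ng P. \<bar>ug k i\<bar> \<le> B) \<and> (\<forall>i<nh P. \<bar>uh k i\<bar> \<le> B)
    \<and> (\<forall>i<mc P. \<bar>uP k i\<bar> \<le> B)"
proof -
  obtain K B where "\<forall>k\<ge>K. mult_norm k \<le> B"
    using mult_norm_eventually_bounded[OF assms] by blast
  then have "\<forall>k\<ge>K. (\<forall>i<ng P. \<bar>ug k i\<bar> \<le> B) \<and> (\<forall>i<nh P. \<bar>uh k i\<bar> \<le> B)
      \<and> (\<forall>i<mc P. \<bar>uP k i\<bar> \<le> B)"
    using abs_multipliers_le_mult_norm by (blast intro: order_trans)
  then show ?thesis
    by blast
qed

lemma multipliers_convergent_subseq:
  assumes "MPCC_MFCQ P zbar"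
  shows "\<exists>r ugb uhb uPb. strict_mono r \<and> (\<forall>i<ng P. (\<lambda>k. ug (r k) i) \<longlonglongrightarrow> ugb i)
    \<and> (\<forall>i<nh P. (\<lambda>k. uh (r k) i) \<longlonglongrightarrow> uhb i) \<and> (\<forall>i<mc P. (\<lambda>k. uP (r k) i) \<longlonglongrightarrow> uPb i)"
proof -
  obtain K B where KB: "\<forall>k\<ge>K. (\<forall>i<ng P. \<bar>ug k i\<bar> \<le> B) \<and> (\<forall>i<nh P. \<bar>uh k i\<bar> \<le> B)
      \<and> (\<forall>i<mc P. \<bar>uP k i\<bar> \<le> B)"
    using multipliers_eventually_bounded[OF assms] by blast
  have ev: "\<forall>\<^sub>F k in sequentially. k \<ge> K"
    by (rule eventually_ge_at_top)
  have "\<forall>i<ng P. Bseq (\<lambda>k. ug k i)" "\<forall>i<nh P. Bseq (\<lambda>k. uh k i)" "\<forall>i<mc P. Bseq (\<lambda>k. uP k i)"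
    using KB by (auto intro!: BfunI[where K = B] eventually_mono[OF ev])
  then show ?thesis
    by (rule Bseq_families_convergent_subseq)
qed

lemma limit_multipliers_stationary:
  assumes r: "strict_mono r"
    and ug: "\<forall>i<ng P. (\<lambda>k. ug (r k) i) \<longlonglongrightarrow> ugb i"
    and uh: "\<forall>i<nh P. (\<lambda>k. uh (r k) i) \<longlonglongrightarrow> uhb i"
    and uP: "\<forall>i<mc P. (\<lambda>k. uP (r k) i) \<longlonglongrightarrow> uPb i"
  shows "(\<exists>\<theta>. (\<forall>i\<in>beta P zbar. 0 \<le> \<theta> i \<and> \<theta> i \<le> 1) \<and>
      C_stat_mult P zbar ugb uhb
        (\<lambda>i. if i \<in> beta P zbar then uPb i * \<theta> i else uPb i)
        (\<lambda>i. if i \<in> beta P zbar then uPb i * (1 - \<theta> i) else uPb i))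
    \<and> ((\<forall>i\<in>beta P zbar. 0 \<le> uPb i) \<longrightarrow> S_stationary P zbar \<and> B_stationary P zbar)"
proof -
  obtain \<theta> where \<theta>: "\<forall>i\<in>beta P zbar. 0 \<le> \<theta> i \<and> \<theta> i \<le> 1"
    and ug_props: "\<forall>i<ng P. 0 \<le> ugb i \<and> (i \<notin> Ig P zbar \<longrightarrow> ugb i = 0)"
    and eq: "mpcc_lagrange_grad P zbar 1 ugb uhb
        (\<lambda>i. if i \<in> beta P zbar then uPb i * \<theta> i else uPb i)
        (\<lambda>i. if i \<in> beta P zbar then uPb i * (1 - \<theta> i) else uPb i) = 0"
    using scaled_KKT_limit[OF r, of "\<lambda>_. 1" 1 ugb uhb uPb] ug uh uP by auto
  define lG where "lG i = (if i \<in> beta P zbar then uPb i * \<theta> i else uPb i)" for i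
  define lH where "lH i = (if i \<in> beta P zbar then uPb i * (1 - \<theta> i) else uPb i)" for i
  have W: "weak_stat_mult P zbar ugb uhb lG lH"
    unfolding weak_stat_mult_iff lG_def lH_def using zbar_feasible ug_props eq by (auto simp: Ig_def)
  have "C_stat_mult P zbar ugb uhb lG lH"
    unfolding C_stat_mult_def
  proof (intro conjI ballI W)
    fix i
    assume "i \<in> beta P zbar"
    then have "lG i * lH i = (uPb i)\<^sup>2 * (\<theta> i * (1 - \<theta> i))" and "0 \<le> \<theta> i * (1 - \<theta> i)"
      using \<theta> by (simp_all add: lG_def lH_def power2_eq_square)
    then show "0 \<le> lG i * lH i"
      by simp
  qed
  moreover have "S_stationary P zbar \<and> B_stationary P zbar" if "\<forall>i\<in>beta P zbar. 0 \<le> uPb i"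
  proof -
    have "S_stat_mult P zbar ugb uhb lG lH"
      unfolding S_stat_mult_def using W \<theta> that by (simp add: lG_def lH_def)
    then show ?thesis
      unfolding S_stationary_def using S_stat_mult_imp_B_stationary by blast
  qed
  ultimately show ?thesis
    using \<theta> unfolding lG_def lH_def by blast
qed

end

theorem theorem3p1:
  fixes P :: "('a::euclidean_space) mpcc" and \<kappa> :: real and eps :: "nat \<Rightarrow> real"
    and p :: "nat \<Rightarrow> nat \<Rightarrow> real" and z :: "nat \<Rightarrow> 'a" and zbar :: 'a
    and ug uh uP :: "nat \<Rightarrow> nat \<Rightarrow> real"
  assumes "C1_fun (obj P)"
    and "\<forall>i<ng P. C1_fun (gc P i)"
    and "\<forall>i<nh P. C1_fun (hc P i)"
    and "\<forall>i<mc P. C1_fun (Gc P i)"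
    and "\<forall>i<mc P. C1_fun (Hc P i)"
    and "bounding_alg P \<kappa> eps p z ug uh uP"
    and "z \<longlonglongrightarrow> zbar"
    and "MPCC_MFCQ P zbar"
  shows "(\<exists>K B. \<forall>k\<ge>K. (\<forall>i<ng P. \<bar>ug k i\<bar> \<le> B) \<and> (\<forall>i<nh P. \<bar>uh k i\<bar> \<le> B)
                     \<and> (\<forall>i<mc P. \<bar>uP k i\<bar> \<le> B))
   \<and> (\<exists>r ugb uhb uPb. strict_mono r \<and>
        (\<forall>i<ng P. (\<lambda>k. ug (r k) i) \<longlonglongrightarrow> ugb i) \<and>
        (\<forall>i<nh P. (\<lambda>k. uh (r k) i) \<longlonglongrightarrow> uhb i) \<and>
        (\<forall>i<mc P. (\<lambda>k. uP (r k) i) \<longlonglongrightarrow> uPb i))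
   \<and> (\<forall>r ugb uhb uPb. strict_mono r \<and>
        (\<forall>i<ng P. (\<lambda>k. ug (r k) i) \<longlonglongrightarrow> ugb i) \<and>
        (\<forall>i<nh P. (\<lambda>k. uh (r k) i) \<longlonglongrightarrow> uhb i) \<and>
        (\<forall>i<mc P. (\<lambda>k. uP (r k) i) \<longlonglongrightarrow> uPb i) \<longrightarrow>
        (\<exists>\<theta>. (\<forall>i\<in>beta P zbar. 0 \<le> \<theta> i \<and> \<theta> i \<le> 1) \<and>
           C_stat_mult P zbar ugb uhb
             (\<lambda>i. if i \<in> beta P zbar then uPb i * \<theta> i else uPb i)
             (\<lambda>i. if i \<in> beta P zbar then uPb i * (1 - \<theta> i) else uPb i)) \<and>
        ((\<forall>i\<in>beta P zbar. 0 \<le> uPb i) \<longrightarrow> S_stationary P zbar \<and> B_stationary P zbar))"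
proof -
  interpret bounding_alg_run P \<kappa> eps p z zbar ug uh uP
    using assms by unfold_locales
  show ?thesis
    by (intro conjI)
      (rule multipliers_eventually_bounded[OF \<open>MPCC_MFCQ P zbar\<close>],
       rule multipliers_convergent_subseq[OF \<open>MPCC_MFCQ P zbar\<close>],
       intro allI impI, elim conjE, rule limit_multipliers_stationary, assumption+)
qed

end
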